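(* Let $g(x)=\alpha x^{q^k}+\beta x$ with $\alpha\in\mathbb{F}_{q^n}^*$, $\beta\in\mathbb{F}_{q^n}$, $1\le k<n$. Let $f(y)=a_dy^{q^d}+a_\ell y^{q^\ell}$ with $0\le \ell<d<n$ and $a_d,a_\ell\in\mathbb{F}_{q^n}^*$, and let $0\le h<n$. Assume that either ($d=h$ and $a_d=\beta$) or ($\ell=h$ and $a_\ell=\beta$). Set $t=\ell$ if $h=d$, and $t=d$ if $h=\ell$. Then $L_f\cap L_g\ne\emptyset$ if and only if $\mathrm{N}_{q^n/q^e}(a_t/\alpha)=1$, where $e=\gcd(n,k,t-h)$.
   Context: Let $q$ be a prime power, $n\ge2$. For $e\mid n$, $\mathrm{N}_{q^n/q^e}(x)=x^{(q^n-1)/(q^e-1)}$. For $q$-polynomials $g,f$ over $\mathbb{F}_{q^n}$ and an integer $0\le h<n$: $L_g=\{\langle(x,g(x))\rangle_{\mathbb{F}_{q^n}}:x\in\mathbb{F}_{q^n}^*\}$ and $L_f=\{\langle(y^{q^h},f(y))\rangle_{\mathbb{F}_{q^n}}:y\in\mathbb{F}_{q^n}^*\}$. *)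

theory Defs
  imports "HOL-Number_Theory.Number_Theory" "HOL-Library.Cardinality"
begin

definition relnorm :: "nat \<Rightarrow> nat \<Rightarrow> nat \<Rightarrow> 'a::field \<Rightarrow> 'a" where
  "relnorm q n e x = x ^ ((q ^ n - 1) div (q ^ e - 1))"

definition pspan :: "'a::field \<times> 'a \<Rightarrow> ('a \<times> 'a) set" where
  "pspan v = {(c * fst v, c * snd v) | c. True}"

definition Lg_set :: "('a::field \<Rightarrow> 'a) \<Rightarrow> ('a \<times> 'a) set set" where
  "Lg_set g = {pspan (x, g x) | x. x \<noteq> 0}"

definition Lf_set :: "nat \<Rightarrow> nat \<Rightarrow> ('a::field \<Rightarrow> 'a) \<Rightarrow> ('a \<times> 'a) set set" where
  "Lf_set q h f = {pspan (y ^ (q ^ h), f y) | y. y \<noteq> 0}"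

end

theory Submission
  imports Defs "HOL-Algebra.Algebraic_Closure_Type"
begin

text \<open>
  A common point of L_f and L_g means x = c y^(q^h) and g(x) = c f(y) for nonzero c, y.
  With f(y) = \<beta> y^(q^h) + a y^(q^t) the \<beta>-terms cancel, leaving
  c^(q^k - 1) y^(q^(h+k)) / y^(q^t) = a / \<alpha>. Since Frobenius is bijective, the quotient
  y^(q^(h+k)) / y^(q^t) runs over all (q^s - 1)-th powers, s = |h + k - t|. In the cyclic
  group of order N = q^n - 1, the products of an a-th and a b-th power are exactly the
  kernel of the power map x^(N / gcd(a, b, N)); here gcd(q^k - 1, q^s - 1, q^n - 1) = q^e - 1
  with e = gcd(n, k, s) = gcd(n, k, t - h), so that map is the norm to GF(q^e).
\<close>

lemma power_minus_one_dvd_power_mult_minus_one: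
  fixes q :: nat
  shows "q ^ n - 1 dvd q ^ (n * j) - 1"
proof (cases "q = 0")
  case False
  then have "[q ^ n = 1] (mod q ^ n - 1)"
    by (simp add: cong_altdef_nat Suc_leI)
  then have "[(q ^ n) ^ j = 1] (mod q ^ n - 1)"
    using cong_pow by fastforce
  with False show ?thesis
    by (simp add: cong_altdef_nat Suc_leI power_mult)
qed (simp add: power_0_left)

lemma gcd_power_minus_one:
  fixes q :: nat
  shows "gcd (q ^ a - 1) (q ^ b - 1) = q ^ gcd a b - 1"
proof (induction a b rule: gcd_nat_induct)
  case (step m n)
  obtain r where r: "q ^ (n * (m div n)) - 1 = (q ^ n - 1) * r"
    using power_minus_one_dvd_power_mult_minus_one by blast
  have "q ^ m - 1 = (q ^ (m mod n) * r) * (q ^ n - 1) + (q ^ (m mod n) - 1)"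
  proof (cases "q = 0")
    case False
    have "q ^ m = q ^ (m mod n) * q ^ (n * (m div n))"
      by (metis mod_mult_div_eq power_add)
    also have "\<dots> = q ^ (m mod n) * ((q ^ n - 1) * r) + q ^ (m mod n)"
      using False r[symmetric] by (simp add: algebra_simps Suc_leI)
    finally show ?thesis using False by (simp add: algebra_simps Suc_leI)
  qed (simp add: power_0_left)
  then have "gcd (q ^ m - 1) (q ^ n - 1) = gcd (q ^ (m mod n) - 1) (q ^ n - 1)"
    by (metis gcd.commute gcd_add_mult)
  with step show ?case
    by (metis gcd.commute gcd_red_nat)
qed simp

lemma gcd_abs_add_diff_eq:
  "gcd k (gcd (nat \<bar>int (h + k) - int t\<bar>) n) = nat (gcd (int n) (gcd (int k) (int t - int h)))"
proof -
  have shift: "gcd (int k) (int (h + k) - int t) = gcd (int k) (int t - int h)"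
  proof -
    have "int (h + k) - int t = int k + - (int t - int h)" by simp
    then show ?thesis by (simp only: gcd_add2 gcd_neg2)
  qed
  have "gcd k (gcd (nat \<bar>int (h + k) - int t\<bar>) n)
      = nat (gcd (int k) (gcd (int (h + k) - int t) (int n)))"
    by (metis abs_gcd_int gcd_nat_abs_left_eq gcd_nat_abs_right_eq)
  also have "gcd (int k) (gcd (int (h + k) - int t) (int n))
      = gcd (int n) (gcd (int k) (int (h + k) - int t))"
    by (simp add: gcd.commute gcd.left_commute)
  finally show ?thesis
    unfolding shift .
qed

lemma nat_pow_ring_of_type_algebra [simp]:
  "x [^]\<^bsub>ring_of_type_algebra\<^esub> (n::nat) = (x::'a::ring_1) ^ n"
  by (induction n) (simp_all add: ring_of_type_algebra_def power_commutes)

lemma finite_field_cyclic: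
  obtains \<gamma> :: "'a::{field,finite}"
  where "\<And>x. x \<noteq> 0 \<Longrightarrow> \<exists>i. x = \<gamma> ^ i"
    and "\<And>j. \<gamma> ^ j = 1 \<longleftrightarrow> (CARD('a) - 1) dvd j"
proof -
  let ?R = "ring_of_type_algebra :: 'a ring"
  let ?G = "Multiplicative_Group.mult_of ?R"
  interpret field ?R by (rule field_from_type_algebra)
  interpret G: group ?G by (rule field_mult_group)
  have carrier_R: "carrier ?R = UNIV" and one_R: "\<one>\<^bsub>?R\<^esub> = 1"
    by (simp_all add: ring_of_type_algebra_def)
  have finite_G: "finite (carrier ?G)" by simp
  obtain \<gamma> where \<gamma>: "\<gamma> \<in> carrier ?G" and gen: "carrier ?G = {\<gamma> ^ i | i. i \<in> UNIV}"
    using finite_field_mult_group_has_gen carrier_R by auto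
  have "G.ord \<gamma> = card (carrier ?G)"
    using G.generate_pow_card[OF \<gamma>] G.generate_pow_on_finite_carrier[OF finite_G \<gamma>] gen
    by (simp add: Multiplicative_Group.nat_pow_mult_of)
  also have "\<dots> = CARD('a) - 1"
    using carrier_R by (simp add: ring_of_type_algebra_def card_Diff_singleton)
  finally have ord: "G.ord \<gamma> = CARD('a) - 1" .
  show ?thesis
  proof
    show "\<exists>i. x = \<gamma> ^ i" if "x \<noteq> 0" for x
      using that gen by (auto simp: ring_of_type_algebra_def)
    show "\<gamma> ^ j = 1 \<longleftrightarrow> (CARD('a) - 1) dvd j" for j
      using G.pow_eq_id[OF \<gamma>, of j] ord one_R by (simp add: Multiplicative_Group.nat_pow_mult_of)
  qed
qed

lemma card_field_ge_two: "CARD('a::{field,finite}) \<ge> 2"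
proof -
  have "card {0::'a, 1} \<le> CARD('a)" by (rule card_mono) auto
  then show ?thesis by simp
qed

lemma card_eq_power_pos:
  assumes "CARD('a::{field,finite}) = q ^ n"
  shows "q > 0" and "n > 0"
proof -
  have "q ^ n \<ge> 2" using assms card_field_ge_two[where 'a='a] by simp
  then show "q > 0" and "n > 0"
    by (cases "q = 0"; cases "n = 0"; simp add: power_0_left)+
qed

lemma power_card_minus_one:
  fixes x :: "'a::{field,finite}"
  assumes "x \<noteq> 0"
  shows "x ^ (CARD('a) - 1) = 1"
proof -
  obtain \<gamma> :: 'a where gen: "\<And>x. x \<noteq> 0 \<Longrightarrow> \<exists>i. x = \<gamma> ^ i"
    and ord: "\<And>j. \<gamma> ^ j = 1 \<longleftrightarrow> (CARD('a) - 1) dvd j"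
    using finite_field_cyclic[where 'a='a] by metis
  obtain i where "x = \<gamma> ^ i" using gen assms by blast
  then show ?thesis using ord by (simp add: power_mult[symmetric])
qed

lemma power_card_power:
  fixes x :: "'a::{field,finite}"
  shows "x ^ (CARD('a) ^ j) = x"
proof (induction j)
  case (Suc j)
  have "x ^ CARD('a) = x"
    using power_card_minus_one[of x] card_field_ge_two[where 'a='a]
    by (cases "x = 0") (simp_all add: power_eq_if)
  then show ?case using Suc by (simp add: power_mult)
qed simp

lemma frobenius_power_surj:
  fixes w :: "'a::{field,finite}"
  assumes "CARD('a) = q ^ n"
  obtains y where "y ^ (q ^ m) = w"
proof
  have "(w ^ (q ^ (n * m - m))) ^ (q ^ m) = w ^ (q ^ (n * m - m + m))"
    by (simp add: power_add power_mult)
  also have "n * m - m + m = n * m"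
    using card_eq_power_pos(2)[OF assms] by simp
  finally show "(w ^ (q ^ (n * m - m))) ^ (q ^ m) = w"
    using power_card_power[of w m] assms by (simp add: power_mult)
qed

lemma ex_power_product_iff:
  fixes A :: "'a::{field,finite}"
  defines "N \<equiv> CARD('a) - 1"
  shows "(\<exists>c z. c \<noteq> 0 \<and> z \<noteq> 0 \<and> c ^ a * z ^ b = A) \<longleftrightarrow> A ^ (N div gcd a (gcd b N)) = 1"
proof -
  define g where "g = gcd a (gcd b N)"
  have "N > 0" using card_field_ge_two[where 'a='a] by (simp add: N_def)
  have "g dvd a" "g dvd b" "g dvd N"
    unfolding g_def by (meson dvd_trans gcd_dvd1 gcd_dvd2)+
  then have N_eq: "N = g * (N div g)" by simp
  have "N div g > 0" using \<open>N > 0\<close> N_eq by (metis gr0I mult_0_right)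
  obtain \<gamma> :: 'a where gen: "\<And>x. x \<noteq> 0 \<Longrightarrow> \<exists>i. x = \<gamma> ^ i"
    and ord: "\<And>j. \<gamma> ^ j = 1 \<longleftrightarrow> N dvd j"
    unfolding N_def using finite_field_cyclic[where 'a='a] by metis
  have "\<gamma> \<noteq> 0" using ord[of N] \<open>N > 0\<close> by (auto simp: power_0_left)
  show ?thesis
    unfolding g_def[symmetric]
  proof
    assume "\<exists>c z. c \<noteq> 0 \<and> z \<noteq> 0 \<and> c ^ a * z ^ b = A"
    then obtain c z where "c \<noteq> 0" "z \<noteq> 0" "A = c ^ a * z ^ b" by auto
    moreover have "x ^ (e * (N div g)) = 1" if "x \<noteq> 0" "g dvd e" for x :: 'a and e
    proof -
      from \<open>g dvd e\<close> obtain e' where "e * (N div g) = N * e'"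
        using N_eq by (metis dvd_def mult.assoc mult.commute)
      then show ?thesis using power_card_minus_one[OF \<open>x \<noteq> 0\<close>] by (simp add: power_mult N_def)
    qed
    ultimately show "A ^ (N div g) = 1"
      using \<open>g dvd a\<close> \<open>g dvd b\<close> by (simp add: power_mult_distrib power_mult[symmetric])
  next
    assume A: "A ^ (N div g) = 1"
    then have "A \<noteq> 0" using \<open>N div g > 0\<close> by (auto simp: power_0_left)
    then obtain m where m: "A = \<gamma> ^ m" using gen by blast
    have "\<gamma> ^ (m * (N div g)) = 1" using A m by (simp add: power_mult)
    then have "g * (N div g) dvd m * (N div g)" using ord N_eq by metis
    then have "g dvd m" using \<open>N div g > 0\<close> by simp
    then obtain m' where m': "m = g * m'" by blast
    obtain u v where bezout_a: "u * int a + v * gcd (int b) (int N) = int g"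
      using bezout_int[of "int a" "gcd (int b) (int N)"] by (auto simp: g_def)
    obtain u' w where bezout_bN: "u' * int b + w * int N = gcd (int b) (int N)"
      using bezout_int by blast
    have "int g = u * int a + v * (u' * int b + w * int N)"
      using bezout_a bezout_bN by simp
    then have bezout: "int g = u * int a + v * u' * int b + v * w * int N"
      by (simp add: algebra_simps)
    \<comment> \<open>integer exponents spare us reducing the Bezout coefficients modulo N\<close>
    define c where "c = \<gamma> powi (int m' * u)"
    define z where "z = \<gamma> powi (int m' * v * u')"
    have "c ^ a * z ^ b = \<gamma> powi (int m' * (u * int a + v * u' * int b))"
      using \<open>\<gamma> \<noteq> 0\<close> by (simp add: c_def z_def power_int_mult[symmetric] power_int_add algebra_simps
          flip: power_int_of_nat)
    also have "\<dots> = \<gamma> powi (int m' * int g) * (\<gamma> ^ N) powi (- int m' * v * w)"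
      using \<open>\<gamma> \<noteq> 0\<close> bezout by (simp add: power_int_mult[symmetric] power_int_add[symmetric] algebra_simps
          flip: power_int_of_nat)
    also have "\<dots> = A"
      using ord[of N] m m' by (simp add: mult.commute flip: power_int_of_nat)
    finally have "c ^ a * z ^ b = A" .
    moreover have "c \<noteq> 0" "z \<noteq> 0"
      using \<open>\<gamma> \<noteq> 0\<close> by (simp_all add: c_def z_def)
    ultimately show "\<exists>c z. c \<noteq> 0 \<and> z \<noteq> 0 \<and> c ^ a * z ^ b = A"
      by blast
  qed
qed

lemma frobenius_ratio_range_le:
  assumes "CARD('a::{field,finite}) = q ^ n"
  shows "(\<lambda>y::'a. y ^ q ^ (v + s) / y ^ q ^ v) ` (- {0}) = (\<lambda>z. z ^ (q ^ s - 1)) ` (- {0})"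
proof -
  have "q > 0" by (rule card_eq_power_pos(1)[OF assms])
  have frob: "y ^ q ^ (v + s) / y ^ q ^ v = (y ^ q ^ v) ^ (q ^ s - 1)" if "y \<noteq> 0" for y :: 'a
    using that \<open>q > 0\<close> by (simp add: power_add power_mult power_diff)
  show ?thesis
  proof (intro equalityI image_subsetI)
    show "y ^ q ^ (v + s) / y ^ q ^ v \<in> (\<lambda>z. z ^ (q ^ s - 1)) ` (- {0})" if "y \<in> - {0}" for y :: 'a
      using that frob[of y] by (intro image_eqI[of _ _ "y ^ q ^ v"]) auto
    show "z ^ (q ^ s - 1) \<in> (\<lambda>y::'a. y ^ q ^ (v + s) / y ^ q ^ v) ` (- {0})" if "z \<in> - {0}" for z
    proof -
      obtain y :: 'a where y: "y ^ q ^ v = z" using frobenius_power_surj assms by metis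
      then have "y \<noteq> 0" using that \<open>q > 0\<close> by auto
      then show ?thesis using frob y by auto
    qed
  qed
qed

lemma frobenius_ratio_range:
  assumes "CARD('a::{field,finite}) = q ^ n"
  shows "(\<lambda>y::'a. y ^ q ^ u / y ^ q ^ v) ` (- {0}) = (\<lambda>z. z ^ (q ^ nat \<bar>int u - int v\<bar> - 1)) ` (- {0})"
proof (cases "u \<le> v")
  case True
  let ?s = "v - u"
  have "(\<lambda>y::'a. y ^ q ^ u / y ^ q ^ v) ` (- {0})
      = inverse ` (\<lambda>y::'a. y ^ q ^ (u + ?s) / y ^ q ^ u) ` (- {0})"
    using True by (auto simp: image_image)
  also have "\<dots> = inverse ` (\<lambda>z. z ^ (q ^ ?s - 1)) ` (- {0})"
    unfolding frobenius_ratio_range_le[OF assms] ..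
  also have "\<dots> = (\<lambda>z. z ^ (q ^ ?s - 1)) ` inverse ` (- {0})"
    by (simp add: image_image power_inverse)
  also have "inverse ` (- {0::'a}) = - {0}"
    by (auto intro!: image_eqI[where x="inverse x" for x])
  finally show ?thesis
    unfolding nat_abs_int_diff using True by simp
next
  case False
  then show ?thesis
    unfolding nat_abs_int_diff using frobenius_ratio_range_le[OF assms, of v "u - v"] by simp
qed

lemma ex_frobenius_ratio_iff:
  assumes "CARD('a::{field,finite}) = q ^ n"
  shows "(\<exists>y::'a. y \<noteq> 0 \<and> P (y ^ q ^ u / y ^ q ^ v))
    \<longleftrightarrow> (\<exists>z. z \<noteq> 0 \<and> P (z ^ (q ^ nat \<bar>int u - int v\<bar> - 1)))"
proof -
  have "(\<exists>y::'a. y \<noteq> 0 \<and> P (y ^ q ^ u / y ^ q ^ v))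
      \<longleftrightarrow> (\<exists>w\<in>(\<lambda>y::'a. y ^ q ^ u / y ^ q ^ v) ` (- {0}). P w)"
    by auto
  also have "\<dots> \<longleftrightarrow> (\<exists>z. z \<noteq> 0 \<and> P (z ^ (q ^ nat \<bar>int u - int v\<bar> - 1)))"
    unfolding frobenius_ratio_range[OF assms] by auto
  finally show ?thesis .
qed

lemma pspan_scale:
  fixes c a b :: "'a::field"
  assumes "c \<noteq> 0"
  shows "pspan (c * a, c * b) = pspan (a, b)"
  using assms unfolding pspan_def
  by (auto simp flip: mult.assoc intro: exI[of _ "d / c" for d])

lemma pspan_eq_iff:
  assumes "fst v \<noteq> 0"
  shows "pspan v = pspan w \<longleftrightarrow> (\<exists>c. c \<noteq> 0 \<and> v = (c * fst w, c * snd w))"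
proof
  assume "pspan v = pspan w"
  moreover have "v \<in> pspan v"
    unfolding pspan_def by (auto intro: exI[of _ 1])
  ultimately obtain c where "v = (c * fst w, c * snd w)"
    unfolding pspan_def by auto
  with assms show "\<exists>c. c \<noteq> 0 \<and> v = (c * fst w, c * snd w)"
    by auto
next
  assume "\<exists>c. c \<noteq> 0 \<and> v = (c * fst w, c * snd w)"
  then show "pspan v = pspan w"
    using pspan_scale[of _ "fst w" "snd w"] by auto
qed

lemma Lf_inter_Lg_nonempty_iff:
  fixes f g :: "'a::field \<Rightarrow> 'a"
  shows "Lf_set q h f \<inter> Lg_set g \<noteq> {} \<longleftrightarrow>
    (\<exists>c y. c \<noteq> 0 \<and> y \<noteq> 0 \<and> g (c * y ^ q ^ h) = c * f y)"
proof -
  have "Lf_set q h f \<inter> Lg_set g \<noteq> {} \<longleftrightarrow>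
      (\<exists>x y. x \<noteq> 0 \<and> y \<noteq> 0 \<and> pspan (x, g x) = pspan (y ^ q ^ h, f y))"
    unfolding Lf_set_def Lg_set_def by blast
  also have "\<dots> \<longleftrightarrow> (\<exists>c y. c \<noteq> 0 \<and> y \<noteq> 0 \<and> g (c * y ^ q ^ h) = c * f y)"
  proof
    assume "\<exists>x y. x \<noteq> 0 \<and> y \<noteq> 0 \<and> pspan (x, g x) = pspan (y ^ q ^ h, f y)"
    then show "\<exists>c y. c \<noteq> 0 \<and> y \<noteq> 0 \<and> g (c * y ^ q ^ h) = c * f y"
      by (auto simp: pspan_eq_iff) blast
  next
    assume "\<exists>c y. c \<noteq> 0 \<and> y \<noteq> 0 \<and> g (c * y ^ q ^ h) = c * f y"
    then obtain c y where "c \<noteq> 0" "y \<noteq> 0" "g (c * y ^ q ^ h) = c * f y"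
      by blast
    then show "\<exists>x y. x \<noteq> 0 \<and> y \<noteq> 0 \<and> pspan (x, g x) = pspan (y ^ q ^ h, f y)"
      using pspan_scale[of c "y ^ q ^ h" "f y"]
      by (intro exI[of _ "c * y ^ q ^ h"] exI[of _ y]) simp
  qed
  finally show ?thesis .
qed

lemma linearized_point_equation_iff:
  fixes \<alpha> \<beta> a c y :: "'a::field"
  assumes "\<alpha> \<noteq> 0" and "c \<noteq> 0" and "y \<noteq> 0" and "q > 0"
  shows "\<alpha> * (c * y ^ q ^ h) ^ q ^ k + \<beta> * (c * y ^ q ^ h) = c * (\<beta> * y ^ q ^ h + a * y ^ q ^ t)
    \<longleftrightarrow> c ^ (q ^ k - 1) * (y ^ q ^ (h + k) / y ^ q ^ t) = a / \<alpha>"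
proof -
  have "c ^ q ^ k = c * c ^ (q ^ k - 1)"
    using \<open>q > 0\<close> by (simp flip: power_Suc)
  moreover have "(y ^ q ^ h) ^ q ^ k = y ^ q ^ (h + k)"
    by (simp add: power_add power_mult)
  ultimately show ?thesis
    using assms by (simp add: power_mult_distrib field_simps)
qed

lemma Lf_inter_Lg_nonempty_iff_relnorm:
  fixes \<alpha> \<beta> a :: "'a::{field,finite}"
  assumes card: "CARD('a) = q ^ n" and "\<alpha> \<noteq> 0"
  shows "Lf_set q h (\<lambda>y. \<beta> * y ^ q ^ h + a * y ^ q ^ t)
      \<inter> Lg_set (\<lambda>x. \<alpha> * x ^ q ^ k + \<beta> * x) \<noteq> {}
    \<longleftrightarrow> relnorm q n (nat (gcd (int n) (gcd (int k) (int t - int h)))) (a / \<alpha>) = 1"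
    (is "?meet \<longleftrightarrow> _")
proof -
  define s where "s = nat \<bar>int (h + k) - int t\<bar>"
  have "q > 0" by (rule card_eq_power_pos(1)[OF card])
  have "?meet \<longleftrightarrow> (\<exists>c y. c \<noteq> 0 \<and> y \<noteq> 0 \<and> c ^ (q ^ k - 1) * (y ^ q ^ (h + k) / y ^ q ^ t) = a / \<alpha>)"
    unfolding Lf_inter_Lg_nonempty_iff
    by (simp add: linearized_point_equation_iff[OF \<open>\<alpha> \<noteq> 0\<close> _ _ \<open>q > 0\<close>] cong: conj_cong)
  also have "\<dots> \<longleftrightarrow> (\<exists>c z. c \<noteq> 0 \<and> z \<noteq> 0 \<and> c ^ (q ^ k - 1) * z ^ (q ^ s - 1) = a / \<alpha>)"
  proof -
    have "(\<exists>y. y \<noteq> 0 \<and> c ^ (q ^ k - 1) * (y ^ q ^ (h + k) / y ^ q ^ t) = a / \<alpha>)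
        \<longleftrightarrow> (\<exists>z. z \<noteq> 0 \<and> c ^ (q ^ k - 1) * z ^ (q ^ s - 1) = a / \<alpha>)" for c
      unfolding s_def by (rule ex_frobenius_ratio_iff[OF card])
    then show ?thesis by blast
  qed
  also have "\<dots> \<longleftrightarrow>
      (a / \<alpha>) ^ ((q ^ n - 1) div gcd (q ^ k - 1) (gcd (q ^ s - 1) (q ^ n - 1))) = 1"
    unfolding ex_power_product_iff card ..
  also have "gcd (q ^ k - 1) (gcd (q ^ s - 1) (q ^ n - 1))
      = q ^ nat (gcd (int n) (gcd (int k) (int t - int h))) - 1"
    unfolding gcd_power_minus_one s_def gcd_abs_add_diff_eq ..
  finally show ?thesis
    unfolding relnorm_def .
qed

theorem proposition3p10:
  fixes q n k d l h :: nat
    and \<alpha> \<beta> a_d a_l :: "'a::{field,finite}"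
  assumes "primepow q" and "n \<ge> 2" and "CARD('a) = q ^ n"
    and "\<alpha> \<noteq> 0" and "1 \<le> k" and "k < n"
    and "l < d" and "d < n" and "a_d \<noteq> 0" and "a_l \<noteq> 0"
    and "h < n"
    and "(d = h \<and> a_d = \<beta>) \<or> (l = h \<and> a_l = \<beta>)"
  shows "(let g = (\<lambda>x::'a. \<alpha> * x ^ (q ^ k) + \<beta> * x);
              f = (\<lambda>y::'a. a_d * y ^ (q ^ d) + a_l * y ^ (q ^ l));
              t = (if h = d then l else d);
              a_t = (if h = d then a_l else a_d);
              e = nat (gcd (int n) (gcd (int k) (int t - int h)))
          in (Lf_set q h f \<inter> Lg_set g \<noteq> {} \<longleftrightarrow> relnorm q n e (a_t / \<alpha>) = 1))"
proof -
  note meet_iff = Lf_inter_Lg_nonempty_iff_relnorm[OF \<open>CARD('a) = q ^ n\<close> \<open>\<alpha> \<noteq> 0\<close>]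
  show ?thesis
  proof (cases "h = d")
    case True
    with \<open>l < d\<close> \<open>(d = h \<and> a_d = \<beta>) \<or> (l = h \<and> a_l = \<beta>)\<close> have "a_d = \<beta>" by auto
    with True show ?thesis
      using meet_iff[where \<beta>=\<beta> and a=a_l and t=l] by (simp add: Let_def)
  next
    case False
    with \<open>(d = h \<and> a_d = \<beta>) \<or> (l = h \<and> a_l = \<beta>)\<close> have "l = h" "a_l = \<beta>" by auto
    with False show ?thesis
      using meet_iff[where \<beta>=\<beta> and a=a_d and t=d] by (simp add: Let_def add.commute)
  qed
qed

end
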